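(* Let $d=(d_1,\dots,d_n)$ be a degree sequence with complementary sequence $\overline d$, and let $k\in\{1,\dots,m(d)\}$. Suppose that no nonzero entry in row $k+1$ of $M(d)$ lies in the same column as a nonzero entry in row $k$ (this condition is vacuous if $k=n$), and suppose that the first $k$ rows of $M(d)$ contain at least one nonzero entry. If the leftmost nonzero entry among the first $k$ rows of $M(d)$ lies in column $j$, then $\Delta_{n+1-j}(\overline d)=\Delta_k(d)$ (and $1\le n+1-j\le m(\overline d)$).
   Context: Degree sequences $d=(d_1,\dots,d_n)$ (of finite simple graphs, terms may be $0$) are listed in nonincreasing order; $\overline d=(n-1-d_n,\dots,n-1-d_1)$ is the complementary sequence. $m(d)=\max\{i : d_i\ge i-1\}$. For integers $k\ge 0$, $\Delta_k(d)=k(k-1)+\sum_{i>k}\min\{k,d_i\}-\sum_{i\le k}d_i$. The corrected Ferrers diagram $F(d)$ is the $n\times n$ matrix whose diagonal entries are $0$ and in which, for each $i$, the first $d_i$ off-diagonal entries of row $i$ (reading left to right, skipping the diagonal position) are $1$ and all other entries are $0$. The difference matrix is $M(d)=F(d)^T-F(d)$. *)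

theory Defs
  imports Main
begin

text \<open>A sequence d = (d_1,...,d_n) is a nat list; entry d_i (1-based) is  d ! (i - 1).\<close>

definition ent :: "nat list \<Rightarrow> nat \<Rightarrow> nat" where
  "ent d i = d ! (i - 1)"

definition degree_sequence :: "nat list \<Rightarrow> bool" where
  "degree_sequence d \<longleftrightarrow>
     sorted_wrt (\<ge>) d \<and>
     (\<exists>E :: nat \<Rightarrow> nat \<Rightarrow> bool.
        (\<forall>u v. E u v \<longrightarrow> u \<in> {1..length d} \<and> v \<in> {1..length d}) \<and>
        (\<forall>u v. E u v \<longleftrightarrow> E v u) \<and> (\<forall>u. \<not> E u u) \<and>
        (\<forall>i \<in> {1..length d}. card {j. E i j} = ent d i))"

definition comp_seq :: "nat list \<Rightarrow> nat list" where
  "comp_seq d = map (\<lambda>x. length d - 1 - x) (rev d)"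

definition mval :: "nat list \<Rightarrow> nat" where
  "mval d = Max (insert 0 {i \<in> {1..length d}. ent d i \<ge> i - 1})"

definition Delta :: "nat \<Rightarrow> nat list \<Rightarrow> int" where
  "Delta k d = int (k * (k - 1)) + (\<Sum>i\<in>{k<..length d}. int (min k (ent d i)))
               - (\<Sum>i\<in>{1..k}. int (ent d i))"

text \<open>Corrected Ferrers diagram, 1-based indices i,j in {1..n}: in row i, the off-diagonal
  position j is the (j)-th off-diagonal position if j < i and the (j-1)-th if j > i.\<close>
definition ferrers :: "nat list \<Rightarrow> nat \<Rightarrow> nat \<Rightarrow> int" where
  "ferrers d i j = (if i \<in> {1..length d} \<and> j \<in> {1..length d} \<and> j \<noteq> i \<and>
                       (if j < i then j else j - 1) \<le> ent d i then 1 else 0)"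

definition diffM :: "nat list \<Rightarrow> nat \<Rightarrow> nat \<Rightarrow> int" where
  "diffM d i j = ferrers d j i - ferrers d i j"

end

theory Submission
  imports Defs
begin

text \<open>For k \<le> m(d) the leading k \<times> k block of F(d) is full off the diagonal, so \<Delta>_k(d) is the sum
  of the first k rows of M(d). Since M(d-bar) is M(d) reflected in the anti-diagonal,
  \<Delta>_{n+1-j}(d-bar) is the sum of the columns j..n of M(d). As j is the leftmost nonzero column
  of the first k rows, it remains to see that rows k+1..n vanish in the columns j..n; this follows
  from d_j \<le> k and d_{k+1} + 1 < j, which the disjointness of the supports of rows k and k+1
  forces.\<close>

lemma ferrers_eq_of_bool:
  "ferrers d i c = of_bool (1 \<le> i \<and> i \<le> length d \<and> 1 \<le> c \<and> c \<le> length d \<and>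
     (c < i \<and> c \<le> ent d i \<or> i < c \<and> c \<le> ent d i + 1))"
  unfolding ferrers_def by auto

lemma diffM_diag [simp]: "diffM d i i = 0"
  unfolding diffM_def by simp

lemma diffM_above_diag:
  assumes "1 \<le> i" "i < c" "c \<le> length d"
  shows "diffM d i c = of_bool (i \<le> ent d c) - of_bool (c \<le> ent d i + 1)"
  unfolding diffM_def ferrers_eq_of_bool using assms by auto

lemma diffM_below_diag:
  assumes "1 \<le> c" "c < i" "i \<le> length d"
  shows "diffM d i c = of_bool (i \<le> ent d c + 1) - of_bool (c \<le> ent d i)"
  unfolding diffM_def ferrers_eq_of_bool using assms by auto

definition bounded_nonincreasing :: "nat list \<Rightarrow> bool" where
  "bounded_nonincreasing d \<longleftrightarrow>
     (\<forall>a b. 1 \<le> a \<longrightarrow> a \<le> b \<longrightarrow> b \<le> length d \<longrightarrow> ent d b \<le> ent d a) \<and>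
     (\<forall>i. 1 \<le> i \<longrightarrow> i \<le> length d \<longrightarrow> ent d i \<le> length d - 1)"

lemma bounded_nonincreasing_antimono:
  "bounded_nonincreasing d \<Longrightarrow> 1 \<le> a \<Longrightarrow> a \<le> b \<Longrightarrow> b \<le> length d \<Longrightarrow> ent d b \<le> ent d a"
  unfolding bounded_nonincreasing_def by blast

lemma bounded_nonincreasing_bound:
  "bounded_nonincreasing d \<Longrightarrow> 1 \<le> i \<Longrightarrow> i \<le> length d \<Longrightarrow> ent d i \<le> length d - 1"
  unfolding bounded_nonincreasing_def by blast

lemma degree_sequence_bounded_nonincreasing:
  assumes "degree_sequence d"
  shows "bounded_nonincreasing d"
  unfolding bounded_nonincreasing_def
proof (intro conjI allI impI)
  fix a b assume ab: "1 \<le> a" "a \<le> b" "b \<le> length d"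
  have sorted: "sorted_wrt (\<ge>) d" using assms unfolding degree_sequence_def by blast
  show "ent d b \<le> ent d a"
  proof (cases "a = b")
    case False
    then show ?thesis
      using sorted_wrt_nth_less[OF sorted, of "a - 1" "b - 1"] ab unfolding ent_def by simp
  qed simp
next
  fix i assume i: "1 \<le> i" "i \<le> length d"
  obtain E :: "nat \<Rightarrow> nat \<Rightarrow> bool" where
    E_vertices: "\<forall>u v. E u v \<longrightarrow> u \<in> {1..length d} \<and> v \<in> {1..length d}" and
    E_irrefl: "\<forall>u. \<not> E u u" and
    E_degree: "\<forall>i \<in> {1..length d}. card {j. E i j} = ent d i"
    using assms unfolding degree_sequence_def by blast
  have "{j. E i j} \<subseteq> {1..length d} - {i}" using E_vertices E_irrefl by auto
  then have "card {j. E i j} \<le> card ({1..length d} - {i})" by (intro card_mono) auto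
  then show "ent d i \<le> length d - 1" using E_degree i by simp
qed

lemma sum_ferrers_row_prefix:
  assumes "1 \<le> c" "c \<le> length d" "ent d c \<le> length d - 1" "k \<le> length d"
  shows "(\<Sum>i\<in>{1..k}. ferrers d c i) =
         int (if c \<le> k then min (k - 1) (ent d c) else min k (ent d c))"
proof -
  let ?row = "{i. i < c \<and> i \<le> ent d c \<or> c < i \<and> i \<le> ent d c + 1}"
  have "(\<Sum>i\<in>{1..k}. ferrers d c i) = int (card ({1..k} \<inter> ?row))"
    unfolding ferrers_eq_of_bool
    by (subst sum_of_bool_eq[symmetric], simp, rule sum.cong) (use assms in auto)
  also have "card ({1..k} \<inter> ?row) = (if c \<le> k then min (k - 1) (ent d c) else min k (ent d c))"
  proof (cases "ent d c < c")
    case True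
    then have "{1..k} \<inter> ?row = {1..min k (ent d c)}" by auto
    then show ?thesis using True by auto
  next
    case False
    then have "{1..k} \<inter> ?row = {1..min k (ent d c + 1)} - {c}" by auto
    then show ?thesis using False assms by (cases "c \<le> k") (simp_all add: card_Diff_singleton_if)
  qed
  finally show ?thesis .
qed

lemma sum_ferrers_row:
  assumes "bounded_nonincreasing d" "1 \<le> c" "c \<le> length d"
  shows "(\<Sum>i\<in>{1..length d}. ferrers d c i) = int (ent d c)"
  using sum_ferrers_row_prefix[of c d "length d"] bounded_nonincreasing_bound[OF assms] assms(2,3)
  by auto

lemma mval_le_length: "mval d \<le> length d"
  unfolding mval_def by (subst Max_le_iff) auto

lemma le_mvalI:
  assumes "1 \<le> k" "k \<le> length d" "k - 1 \<le> ent d k"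
  shows "k \<le> mval d"
  unfolding mval_def by (rule Max_ge) (use assms in auto)

lemma ent_ge_of_le_mval:
  assumes "bounded_nonincreasing d" "1 \<le> k" "k \<le> mval d" "1 \<le> c" "c \<le> k"
  shows "k - 1 \<le> ent d c"
proof -
  let ?S = "insert 0 {i \<in> {1..length d}. ent d i \<ge> i - 1}"
  have "mval d \<in> ?S" unfolding mval_def by (rule Max_in) simp_all
  then have m: "mval d \<in> {1..length d}" "mval d - 1 \<le> ent d (mval d)" using assms(2,3) by auto
  have "ent d (mval d) \<le> ent d c" using bounded_nonincreasing_antimono[OF assms(1)] assms m by auto
  then show ?thesis using m assms(3) by linarith
qed

lemma sum_diffM_rows_eq_Delta:
  assumes "bounded_nonincreasing d" "1 \<le> k" "k \<le> mval d"
  shows "(\<Sum>i\<in>{1..k}. \<Sum>c\<in>{1..length d}. diffM d i c) = Delta k d"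
proof -
  let ?n = "length d"
  let ?col = "\<lambda>c. int (if c \<le> k then min (k - 1) (ent d c) else min k (ent d c))"
  have kn: "k \<le> ?n" using assms(3) mval_le_length[of d] by linarith
  have split: "{1..?n} = {1..k} \<union> {k<..?n}" using kn by auto
  have "(\<Sum>i\<in>{1..k}. \<Sum>c\<in>{1..?n}. diffM d i c) =
        (\<Sum>c\<in>{1..?n}. \<Sum>i\<in>{1..k}. ferrers d c i) - (\<Sum>i\<in>{1..k}. \<Sum>c\<in>{1..?n}. ferrers d i c)"
    unfolding diffM_def by (simp add: sum_subtractf) (rule sum.swap)
  also have "(\<Sum>i\<in>{1..k}. \<Sum>c\<in>{1..?n}. ferrers d i c) = (\<Sum>i\<in>{1..k}. int (ent d i))"
    using sum_ferrers_row[OF assms(1)] kn by (intro sum.cong) auto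
  also have "(\<Sum>c\<in>{1..?n}. \<Sum>i\<in>{1..k}. ferrers d c i) = (\<Sum>c\<in>{1..?n}. ?col c)"
    using sum_ferrers_row_prefix bounded_nonincreasing_bound[OF assms(1)] kn
    by (intro sum.cong) auto
  also have "\<dots> = (\<Sum>c\<in>{1..k}. ?col c) + (\<Sum>c\<in>{k<..?n}. ?col c)"
    unfolding split by (rule sum.union_disjoint) auto
  also have "(\<Sum>c\<in>{1..k}. ?col c) = (\<Sum>c\<in>{1..k}. int (k - 1))"
    using ent_ge_of_le_mval[OF assms] by (intro sum.cong) auto
  also have "(\<Sum>c\<in>{k<..?n}. ?col c) = (\<Sum>c\<in>{k<..?n}. int (min k (ent d c)))"
    by (intro sum.cong) auto
  finally show ?thesis
    unfolding Delta_def using assms(2) by (simp add: of_nat_diff)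
qed

lemma length_comp_seq [simp]: "length (comp_seq d) = length d"
  unfolding comp_seq_def by simp

lemma ent_comp_seq:
  assumes "1 \<le> i" "i \<le> length d"
  shows "ent (comp_seq d) i = length d - 1 - ent d (length d + 1 - i)"
  using assms unfolding comp_seq_def ent_def by (simp add: rev_nth)

lemma bounded_nonincreasing_comp_seq:
  assumes "bounded_nonincreasing d"
  shows "bounded_nonincreasing (comp_seq d)"
  unfolding bounded_nonincreasing_def
proof (intro conjI allI impI)
  fix a b assume ab: "1 \<le> a" "a \<le> b" "b \<le> length (comp_seq d)"
  then have "ent d (length d + 1 - a) \<le> ent d (length d + 1 - b)"
    using bounded_nonincreasing_antimono[OF assms] by simp
  then show "ent (comp_seq d) b \<le> ent (comp_seq d) a" using ab by (simp add: ent_comp_seq)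
qed (simp add: ent_comp_seq)

lemma diffM_comp_seq:
  assumes "bounded_nonincreasing d" "1 \<le> i" "i \<le> length d" "1 \<le> c" "c \<le> length d"
  shows "diffM (comp_seq d) i c = diffM d (length d + 1 - c) (length d + 1 - i)"
proof (cases "i = c")
  case False
  have "ferrers (comp_seq d) a b = 1 - ferrers d (length d + 1 - a) (length d + 1 - b)"
    if "a \<in> {i, c}" "b \<in> {i, c}" "a \<noteq> b" for a b
    using that assms bounded_nonincreasing_bound[OF assms(1), of "length d + 1 - a"]
    unfolding ferrers_eq_of_bool by (auto simp: ent_comp_seq)
  then show ?thesis using False unfolding diffM_def by simp
qed simp

lemma sum_reflect:
  fixes g :: "nat \<Rightarrow> 'a::comm_monoid_add"
  assumes "1 \<le> a" "b \<le> n"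
  shows "(\<Sum>x\<in>{a..b}. g (n + 1 - x)) = (\<Sum>y\<in>{n + 1 - b..n + 1 - a}. g y)"
  by (rule sum.reindex_bij_witness[of _ "\<lambda>y. n + 1 - y" "\<lambda>y. n + 1 - y"]) (use assms in auto)

lemma sum_diffM_comp_seq_rows:
  assumes "bounded_nonincreasing d" "1 \<le> j" "j \<le> length d"
  shows "(\<Sum>i\<in>{1..length d + 1 - j}. \<Sum>c\<in>{1..length d}. diffM (comp_seq d) i c)
       = (\<Sum>r\<in>{1..length d}. \<Sum>c\<in>{j..length d}. diffM d r c)"
proof -
  let ?n = "length d"
  have "(\<Sum>i\<in>{1..?n + 1 - j}. \<Sum>c\<in>{1..?n}. diffM (comp_seq d) i c)
      = (\<Sum>i\<in>{1..?n + 1 - j}. \<Sum>c\<in>{1..?n}. diffM d (?n + 1 - c) (?n + 1 - i))"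
    using diffM_comp_seq[OF assms(1)] assms(2,3) by (intro sum.cong refl) auto
  also have "\<dots> = (\<Sum>i\<in>{1..?n + 1 - j}. \<Sum>r\<in>{1..?n}. diffM d r (?n + 1 - i))"
  proof (rule sum.cong[OF refl])
    fix i
    show "(\<Sum>c\<in>{1..?n}. diffM d (?n + 1 - c) (?n + 1 - i)) = (\<Sum>r\<in>{1..?n}. diffM d r (?n + 1 - i))"
      using sum_reflect[of 1 ?n ?n "\<lambda>r. diffM d r (?n + 1 - i)"] by simp
  qed
  also have "\<dots> = (\<Sum>r\<in>{1..?n}. \<Sum>i\<in>{1..?n + 1 - j}. diffM d r (?n + 1 - i))"
    by (rule sum.swap)
  also have "\<dots> = (\<Sum>r\<in>{1..?n}. \<Sum>c\<in>{j..?n}. diffM d r c)"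
  proof (rule sum.cong[OF refl])
    fix r
    show "(\<Sum>i\<in>{1..?n + 1 - j}. diffM d r (?n + 1 - i)) = (\<Sum>c\<in>{j..?n}. diffM d r c)"
      using sum_reflect[of 1 "?n + 1 - j" ?n "diffM d r"] assms(2,3) by simp
  qed
  finally show ?thesis .
qed

lemma diffM_leading_block_zero:
  assumes "bounded_nonincreasing d" "1 \<le> k" "k \<le> mval d"
    and "1 \<le> i" "i \<le> k" "1 \<le> c" "c \<le> k"
  shows "diffM d i c = 0"
proof -
  have "k \<le> length d" using assms(3) mval_le_length[of d] by linarith
  moreover have "k - 1 \<le> ent d i" "k - 1 \<le> ent d c"
    using ent_ge_of_le_mval[OF assms(1-3)] assms(4-7) by auto
  ultimately show ?thesis
    using assms(4-7) diffM_above_diag[of i c d] diffM_below_diag[of c i d]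
    by (cases i c rule: linorder_cases) auto
qed

lemma first_nonzero_column_bounds:
  assumes nonincr: "bounded_nonincreasing d" and "1 \<le> k" "k \<le> mval d"
    and disjoint: "k < length d \<longrightarrow>
           (\<forall>c \<in> {1..length d}. \<not> (diffM d (k + 1) c \<noteq> 0 \<and> diffM d k c \<noteq> 0))"
    and j: "j \<in> {1..length d}"
    and nonzero: "\<exists>i \<in> {1..k}. diffM d i j \<noteq> 0"
  shows "k < j \<and> ent d j \<le> k \<and> ent d (k + 1) + 1 < j"
proof -
  obtain i where i: "1 \<le> i" "i \<le> k" "diffM d i j \<noteq> 0" using nonzero by auto
  have kj: "k < j"
    using diffM_leading_block_zero[OF assms(1-3) i(1,2)] i(3) j by (meson atLeastAtMost_iff not_le)
  then have kn: "k < length d" using j by simp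
  then have not_both: "\<not> (diffM d (k + 1) j \<noteq> 0 \<and> diffM d k j \<noteq> 0)" using disjoint j by blast
  have ent_k: "ent d k \<le> ent d i" "ent d (k + 1) \<le> ent d k"
    using bounded_nonincreasing_antimono[OF nonincr] i assms(2) kn by auto
  have ent_j: "ent d j \<le> ent d (k + 1)"
    using bounded_nonincreasing_antimono[OF nonincr, of "k + 1" j] kj j by simp
  have row_k: "diffM d k j = of_bool (k \<le> ent d j) - of_bool (j \<le> ent d k + 1)"
    and row_k1: "k + 1 < j \<Longrightarrow>
                  diffM d (k + 1) j = of_bool (k + 1 \<le> ent d j) - of_bool (j \<le> ent d (k + 1) + 1)"
    using diffM_above_diag[of k j d] diffM_above_diag[of "k + 1" j d] assms(2) kj j by auto
  have "diffM d i j = of_bool (i \<le> ent d j) - of_bool (j \<le> ent d i + 1)"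
    using diffM_above_diag[of i j d] i kj j by simp
  then consider (positive) "i \<le> ent d j" "ent d i + 1 < j" | (negative) "ent d j < i" "j \<le> ent d i + 1"
    using i(3) by (cases "i \<le> ent d j"; cases "j \<le> ent d i + 1") auto
  \<comment> \<open>if the claimed bound failed, rows k and k+1 would both carry the sign of M(d)_{ij} in column j\<close>
  then show ?thesis
  proof cases
    case positive
    then have "ent d j \<le> k"
      using not_both row_k row_k1 ent_k ent_j by (cases "k + 1 < j") auto
    then show ?thesis using kj positive ent_k by simp
  next
    case negative
    have "ent d (k + 1) + 1 < j"
    proof (cases "k + 1 < j")
      case True
      then show ?thesis using not_both row_k row_k1 ent_k negative i(2) by auto
    next
      case False
      then have "j = k + 1" using kj by simp
      then show ?thesis using negative i(2) by simp
    qed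
    then show ?thesis using kj negative i(2) by simp
  qed
qed

lemma diffM_lower_right_block_zero:
  assumes "bounded_nonincreasing d" "k < r" "r \<le> length d" "j \<le> c" "c \<le> length d"
    and "k < j" "ent d j \<le> k" "ent d (k + 1) + 1 < j"
  shows "diffM d r c = 0"
proof -
  have "ent d r \<le> ent d (k + 1)" "ent d c \<le> ent d j"
    using bounded_nonincreasing_antimono[OF assms(1)] assms by auto
  then show ?thesis
    unfolding diffM_def ferrers_eq_of_bool using assms(2-8) by auto
qed

lemma sum_upper_right_block:
  fixes f :: "nat \<Rightarrow> nat \<Rightarrow> 'a::comm_monoid_add"
  assumes "k \<le> n" "1 \<le> j"
    and left_zero: "\<And>i c. 1 \<le> i \<Longrightarrow> i \<le> k \<Longrightarrow> 1 \<le> c \<Longrightarrow> c < j \<Longrightarrow> f i c = 0"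
    and below_zero: "\<And>r c. k < r \<Longrightarrow> r \<le> n \<Longrightarrow> j \<le> c \<Longrightarrow> c \<le> n \<Longrightarrow> f r c = 0"
  shows "(\<Sum>r\<in>{1..n}. \<Sum>c\<in>{j..n}. f r c) = (\<Sum>r\<in>{1..k}. \<Sum>c\<in>{1..n}. f r c)"
proof -
  have "(\<Sum>r\<in>{1..n}. \<Sum>c\<in>{j..n}. f r c) =
        (\<Sum>r\<in>{1..k}. \<Sum>c\<in>{j..n}. f r c) + (\<Sum>r\<in>{k<..n}. \<Sum>c\<in>{j..n}. f r c)"
    using assms(1) by (subst sum.union_disjoint[symmetric]) (auto intro!: sum.cong)
  also have "(\<Sum>r\<in>{k<..n}. \<Sum>c\<in>{j..n}. f r c) = 0"
    using below_zero by (intro sum.neutral ballI) auto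
  also have "(\<Sum>r\<in>{1..k}. \<Sum>c\<in>{j..n}. f r c) = (\<Sum>r\<in>{1..k}. \<Sum>c\<in>{1..n}. f r c)"
  proof (rule sum.cong[OF refl])
    fix r assume r: "r \<in> {1..k}"
    have "{1..n} = {1..<j} \<inter> {1..n} \<union> {j..n}" using assms(2) by auto
    then have "(\<Sum>c\<in>{1..n}. f r c) = (\<Sum>c\<in>{1..<j} \<inter> {1..n} \<union> {j..n}. f r c)"
      by (rule arg_cong)
    also have "\<dots> = (\<Sum>c\<in>{1..<j} \<inter> {1..n}. f r c) + (\<Sum>c\<in>{j..n}. f r c)"
      by (rule sum.union_disjoint) auto
    also have "(\<Sum>c\<in>{1..<j} \<inter> {1..n}. f r c) = 0"
      using left_zero r by (intro sum.neutral) auto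
    finally show "(\<Sum>c\<in>{j..n}. f r c) = (\<Sum>c\<in>{1..n}. f r c)" by simp
  qed
  finally show ?thesis by simp
qed

theorem lemma9:
  fixes d :: "nat list" and k j :: nat
  assumes "degree_sequence d"
    and "1 \<le> k" and "k \<le> mval d"
    and "k < length d \<longrightarrow>
           (\<forall>c \<in> {1..length d}. \<not> (diffM d (k + 1) c \<noteq> 0 \<and> diffM d k c \<noteq> 0))"
    and "\<exists>i \<in> {1..k}. \<exists>c \<in> {1..length d}. diffM d i c \<noteq> 0"
    and "j \<in> {1..length d}"
    and "\<exists>i \<in> {1..k}. diffM d i j \<noteq> 0"
    and "\<forall>c \<in> {1..<j}. \<forall>i \<in> {1..k}. diffM d i c = 0"
  shows "Delta (length d + 1 - j) (comp_seq d) = Delta k d \<and>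
         1 \<le> length d + 1 - j \<and> length d + 1 - j \<le> mval (comp_seq d)"
proof -
  let ?n = "length d" and ?K = "length d + 1 - j"
  have d: "bounded_nonincreasing d" using degree_sequence_bounded_nonincreasing[OF assms(1)] .
  have j: "1 \<le> j" "j \<le> ?n" using assms(6) by auto
  have bounds: "k < j" "ent d j \<le> k" "ent d (k + 1) + 1 < j"
    using first_nonzero_column_bounds[OF d assms(2,3,4,6,7)] by auto
  have K: "1 \<le> ?K" "?K \<le> mval (comp_seq d)"
    using j bounds bounded_nonincreasing_bound[OF d j]
    by (auto intro!: le_mvalI simp: ent_comp_seq)
  have "Delta ?K (comp_seq d) = (\<Sum>r\<in>{1..?n}. \<Sum>c\<in>{j..?n}. diffM d r c)"
    using sum_diffM_rows_eq_Delta[OF bounded_nonincreasing_comp_seq[OF d] K]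
      sum_diffM_comp_seq_rows[OF d j] by simp
  also have "\<dots> = (\<Sum>r\<in>{1..k}. \<Sum>c\<in>{1..?n}. diffM d r c)"
    using bounds j assms(8) diffM_lower_right_block_zero[OF d]
    by (intro sum_upper_right_block) auto
  also have "\<dots> = Delta k d"
    using sum_diffM_rows_eq_Delta[OF d assms(2,3)] .
  finally show ?thesis using K by simp
qed

end
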